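(* Let $\mathbb{F}$ be a field, $\mathbb{F}(T)$ the field of rational functions in $T$, and $H=\{h\in\mathbb{F}(T)\mid h \text{ is defined at } 1 \text{ and } h(1)=1\}$. Let $G$ be the set of matrices $\begin{pmatrix}1&f\\0&h\end{pmatrix}$ with $f\in\mathbb{F}(T)$, $h\in H$. Then $G$ is a group under matrix multiplication, the center of $G$ is trivial (so $G$ is not nilpotent), and $[e]_g$ is a subgroup of $G$ for every $g\in G$.
   Context: For $g\in G$, $[e]_g=\{[x,g]\mid x\in G\}$ with $[x,y]=x^{-1}y^{-1}xy$; this is the twisted conjugacy class of the unit element for the inner automorphism $x\mapsto g^{-1}xg$. *)

theory Defs
  imports "HOL-Analysis.Analysis" "HOL-Computational_Algebra.Polynomial"
    "HOL-Computational_Algebra.Fraction_Field" "HOL-Algebra.Group"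
begin

text \<open>H: rational functions defined at 1 with value 1 there; h is defined at 1 iff
  it has a representation p/q with q(1) \<noteq> 0, and then h(1) = p(1)/q(1).\<close>
definition H_set :: "'a::field poly fract set" where
  "H_set = {h. \<exists>p q. q \<noteq> 0 \<and> poly q 1 \<noteq> 0 \<and> h = Fract p q \<and> poly p 1 / poly q 1 = 1}"

definition mat2 :: "'a::field poly fract \<Rightarrow> 'a poly fract \<Rightarrow> 'a poly fract ^ 2 ^ 2" where
  "mat2 f h = vector [vector [1, f], vector [0, h]]"

definition G_grp :: "('a::field poly fract ^ 2 ^ 2) monoid" where
  "G_grp = \<lparr> carrier = {mat2 f h | f h. h \<in> H_set}, mult = (\<lambda>A B. A ** B), one = mat 1 \<rparr>"

definition center :: "('b, 'c) monoid_scheme \<Rightarrow> 'b set" where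
  "center G = {z \<in> carrier G. \<forall>x \<in> carrier G. z \<otimes>\<^bsub>G\<^esub> x = x \<otimes>\<^bsub>G\<^esub> z}"

definition commutator :: "('b, 'c) monoid_scheme \<Rightarrow> 'b \<Rightarrow> 'b \<Rightarrow> 'b" where
  "commutator G x y = inv\<^bsub>G\<^esub> x \<otimes>\<^bsub>G\<^esub> inv\<^bsub>G\<^esub> y \<otimes>\<^bsub>G\<^esub> x \<otimes>\<^bsub>G\<^esub> y"

text \<open>Twisted conjugacy class of the unit for the inner automorphism by g.\<close>
definition unit_class :: "('b, 'c) monoid_scheme \<Rightarrow> 'b \<Rightarrow> 'b set" where
  "unit_class G g = {commutator G x g | x. x \<in> carrier G}"

end

theory Submission imports Defs begin

text \<open>Since mat2 f h ** mat2 f' h' = mat2 (f' + f h') (h h'), every commutator is a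
  translation: [mat2 a u, mat2 b v] = mat2 (a (v - 1) - b (u - 1)) 1. A central mat2 f h
  commutes with mat2 1 1, forcing h = 1, and with mat2 0 T, forcing f T = f, hence f = 0.
  The set H is 1 plus the additive group of functions vanishing at 1, so it is closed under
  u - v + 1; therefore for fixed b, v the values a (v - 1) - b (u - 1) form an additive
  subgroup of F(T), and the unit class of mat2 b v is the corresponding group of translations.\<close>

lemma H_set_iff:
  "h \<in> H_set \<longleftrightarrow> (\<exists>p q. q \<noteq> 0 \<and> poly q 1 \<noteq> 0 \<and> h = Fract p q \<and> poly p 1 = poly q 1)"
  unfolding H_set_def by auto

lemma one_in_H_set: "1 \<in> H_set"
  unfolding H_set_iff by (intro exI[of _ 1]) (simp add: One_fract_def)

lemma X_in_H_set: "Fract [:0, 1:] 1 \<in> H_set"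
  unfolding H_set_iff by (intro exI[of _ "[:0, 1:]"] exI[of _ 1]) simp

lemma H_set_mult:
  assumes "u \<in> H_set" "v \<in> H_set" shows "u * v \<in> H_set"
proof -
  obtain p q where u: "q \<noteq> 0" "poly q 1 \<noteq> 0" "u = Fract p q" "poly p 1 = poly q 1"
    using assms(1) unfolding H_set_iff by blast
  obtain p' q' where v: "q' \<noteq> 0" "poly q' 1 \<noteq> 0" "v = Fract p' q'" "poly p' 1 = poly q' 1"
    using assms(2) unfolding H_set_iff by blast
  show ?thesis unfolding H_set_iff
    by (intro exI[of _ "p * p'"] exI[of _ "q * q'"]) (simp add: u v)
qed

lemma H_set_nonzero: "h \<in> H_set \<Longrightarrow> h \<noteq> 0"
  unfolding H_set_iff by (auto simp: Zero_fract_def eq_fract simp del: fract_collapse)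

lemma H_set_inverse:
  assumes "u \<in> H_set" shows "inverse u \<in> H_set"
proof -
  obtain p q where u: "q \<noteq> 0" "poly q 1 \<noteq> 0" "u = Fract p q" "poly p 1 = poly q 1"
    using assms unfolding H_set_iff by blast
  then have "p \<noteq> 0" by auto
  then show ?thesis unfolding H_set_iff
    by (intro exI[of _ q] exI[of _ p]) (simp add: u)
qed

lemma H_set_diff_add_one:
  assumes "u \<in> H_set" "v \<in> H_set" shows "u - v + 1 \<in> H_set"
proof -
  obtain p q where u: "q \<noteq> 0" "poly q 1 \<noteq> 0" "u = Fract p q" "poly p 1 = poly q 1"
    using assms(1) unfolding H_set_iff by blast
  obtain p' q' where v: "q' \<noteq> 0" "poly q' 1 \<noteq> 0" "v = Fract p' q'" "poly p' 1 = poly q' 1"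
    using assms(2) unfolding H_set_iff by blast
  have "u - v + 1 = Fract p q - Fract p' q' + Fract 1 1"
    by (simp only: u v fract_collapse)
  also have "\<dots> = Fract (p * q' - p' * q + q * q') (q * q')"
    using u v by (simp del: fract_collapse)
  finally have "u - v + 1 = Fract (p * q' - p' * q + q * q') (q * q')" .
  then show ?thesis unfolding H_set_iff
    by (intro exI[of _ "p * q' - p' * q + q * q'"] exI[of _ "q * q'"]) (simp add: u v)
qed

lemma H_set_add_diff_one: "u \<in> H_set \<Longrightarrow> v \<in> H_set \<Longrightarrow> u + v - 1 \<in> H_set"
  using H_set_diff_add_one[of u "1 - v + 1"] H_set_diff_add_one[OF one_in_H_set, of v]
  by (simp add: algebra_simps)

lemma H_set_reflect: "u \<in> H_set \<Longrightarrow> 2 - u \<in> H_set"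
  using H_set_diff_add_one[OF one_in_H_set, of u] by (simp add: algebra_simps)

lemma mat2_mult: "mat2 f h ** mat2 f' h' = mat2 (f' + f * h') (h * h')"
  unfolding mat2_def
  by (simp add: matrix_matrix_mult_def sum_2 vec_eq_iff forall_2 vector_2)

lemma mat_1_eq_mat2: "mat 1 = mat2 0 1"
  unfolding mat2_def by (simp add: mat_def vec_eq_iff forall_2)

lemma mat2_eq_iff: "mat2 f h = mat2 f' h' \<longleftrightarrow> f = f' \<and> h = h'"
  unfolding mat2_def by (auto simp: vec_eq_iff forall_2)

lemma mat2_inverse_left: "h \<noteq> 0 \<Longrightarrow> mat2 (- f / h) (inverse h) ** mat2 f h = mat2 0 1"
  by (simp add: mat2_mult mat2_eq_iff)

lemma carrier_G_grp: "x \<in> carrier G_grp \<longleftrightarrow> (\<exists>f h. x = mat2 f h \<and> h \<in> H_set)"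
  unfolding G_grp_def by auto

lemma mat2_in_carrier_G_grp: "h \<in> H_set \<Longrightarrow> mat2 f h \<in> carrier G_grp"
  unfolding carrier_G_grp by blast

lemma G_grp_mult: "x \<otimes>\<^bsub>G_grp\<^esub> y = x ** y"
  and G_grp_one: "\<one>\<^bsub>G_grp\<^esub> = mat2 0 1"
  unfolding G_grp_def by (simp_all add: mat_1_eq_mat2)

lemma group_G_grp: "group (G_grp :: ('a::field poly fract ^ 2 ^ 2) monoid)"
proof (rule groupI)
  fix x y :: "'a poly fract ^ 2 ^ 2"
  assume "x \<in> carrier G_grp" "y \<in> carrier G_grp"
  then show "x \<otimes>\<^bsub>G_grp\<^esub> y \<in> carrier G_grp"
    unfolding carrier_G_grp G_grp_mult by (auto simp: mat2_mult) (blast intro: H_set_mult)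
next
  show "\<one>\<^bsub>G_grp\<^esub> \<in> carrier (G_grp :: ('a poly fract ^ 2 ^ 2) monoid)"
    unfolding G_grp_one by (rule mat2_in_carrier_G_grp[OF one_in_H_set])
next
  fix x y z :: "'a poly fract ^ 2 ^ 2"
  show "x \<otimes>\<^bsub>G_grp\<^esub> y \<otimes>\<^bsub>G_grp\<^esub> z = x \<otimes>\<^bsub>G_grp\<^esub> (y \<otimes>\<^bsub>G_grp\<^esub> z)"
    unfolding G_grp_mult by (simp add: matrix_mul_assoc)
next
  fix x :: "'a poly fract ^ 2 ^ 2"
  assume "x \<in> carrier G_grp"
  then show "\<one>\<^bsub>G_grp\<^esub> \<otimes>\<^bsub>G_grp\<^esub> x = x"
    unfolding carrier_G_grp G_grp_mult G_grp_one by (auto simp: mat2_mult)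
next
  fix x :: "'a poly fract ^ 2 ^ 2"
  assume "x \<in> carrier G_grp"
  then obtain f h where x: "x = mat2 f h" "h \<in> H_set" unfolding carrier_G_grp by blast
  then show "\<exists>y \<in> carrier G_grp. y \<otimes>\<^bsub>G_grp\<^esub> x = \<one>\<^bsub>G_grp\<^esub>"
    using mat2_inverse_left[OF H_set_nonzero] mat2_in_carrier_G_grp[OF H_set_inverse]
    unfolding G_grp_mult G_grp_one by blast
qed

lemma inv_G_grp_mat2:
  assumes "h \<in> H_set" shows "inv\<^bsub>G_grp\<^esub> (mat2 f h) = mat2 (- f / h) (inverse h)"
  using group.inv_equality[OF group_G_grp] mat2_inverse_left[OF H_set_nonzero[OF assms]]
    mat2_in_carrier_G_grp[OF assms] mat2_in_carrier_G_grp[OF H_set_inverse[OF assms]]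
  unfolding G_grp_mult G_grp_one by blast

lemma commutator_G_grp_mat2:
  assumes "u \<in> H_set" "v \<in> H_set"
  shows "commutator G_grp (mat2 a u) (mat2 b v) = mat2 (a * (v - 1) - b * (u - 1)) 1"
  using H_set_nonzero[OF assms(1)] H_set_nonzero[OF assms(2)]
  unfolding commutator_def inv_G_grp_mat2[OF assms(1)] inv_G_grp_mat2[OF assms(2)]
    G_grp_mult mat2_mult
  by (simp add: mat2_eq_iff field_simps)

lemma center_G_grp: "center G_grp = {\<one>\<^bsub>G_grp\<^esub>}"
proof
  show "{\<one>\<^bsub>G_grp\<^esub>} \<subseteq> center G_grp"
    unfolding center_def using group.is_monoid[OF group_G_grp] by (auto simp: monoid.l_one monoid.r_one)
next
  show "center G_grp \<subseteq> {\<one>\<^bsub>G_grp\<^esub>}"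
  proof
    fix z assume z: "z \<in> center G_grp"
    then obtain f h where zfh: "z = mat2 f h" unfolding center_def carrier_G_grp by blast
    have commutes: "z ** x = x ** z" if "x \<in> carrier G_grp" for x
      using z that unfolding center_def G_grp_mult by blast
    let ?X = "Fract [:0, 1:] 1"
    have "h = 1"
      using commutes[OF mat2_in_carrier_G_grp[OF one_in_H_set, of 1]]
      by (simp add: zfh mat2_mult mat2_eq_iff)
    have "f * ?X = f"
      using commutes[OF mat2_in_carrier_G_grp[OF X_in_H_set, of 0]]
      by (simp add: zfh mat2_mult mat2_eq_iff)
    moreover have "?X \<noteq> 1"
      by (simp add: One_fract_def eq_fract one_pCons del: fract_collapse)
    ultimately have "f = 0"
      by (metis mult.right_neutral mult_left_cancel)
    show "z \<in> {\<one>\<^bsub>G_grp\<^esub>}"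
      using \<open>h = 1\<close> \<open>f = 0\<close> by (simp add: zfh G_grp_one)
  qed
qed

lemma unit_class_G_grp_mat2:
  assumes "v \<in> H_set"
  shows "unit_class G_grp (mat2 b v)
    = (\<lambda>c. mat2 c 1) ` {a * (v - 1) - b * (u - 1) | a u. u \<in> H_set}"
proof -
  have "unit_class G_grp (mat2 b v) = {commutator G_grp (mat2 a u) (mat2 b v) | a u. u \<in> H_set}"
    unfolding unit_class_def carrier_G_grp by blast
  also have "\<dots> = {mat2 (a * (v - 1) - b * (u - 1)) 1 | a u. u \<in> H_set}"
    using commutator_G_grp_mat2[OF _ assms] by (auto; metis)
  finally show ?thesis by blast
qed

lemma subgroup_translations:
  assumes "0 \<in> S" "\<And>c. c \<in> S \<Longrightarrow> - c \<in> S" "\<And>c d. c \<in> S \<Longrightarrow> d \<in> S \<Longrightarrow> c + d \<in> S"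
  shows "subgroup ((\<lambda>c. mat2 c 1) ` S) G_grp"
proof (rule group.subgroupI[OF group_G_grp])
  show "(\<lambda>c. mat2 c 1) ` S \<subseteq> carrier G_grp" "(\<lambda>c. mat2 c 1) ` S \<noteq> {}"
    using mat2_in_carrier_G_grp[OF one_in_H_set] assms(1) by auto
next
  fix x assume "x \<in> (\<lambda>c. mat2 c 1) ` S"
  then obtain c where "x = mat2 c 1" "c \<in> S" by blast
  then show "inv\<^bsub>G_grp\<^esub> x \<in> (\<lambda>c. mat2 c 1) ` S"
    using assms(2) by (simp add: inv_G_grp_mat2[OF one_in_H_set])
next
  fix x y assume "x \<in> (\<lambda>c. mat2 c 1) ` S" "y \<in> (\<lambda>c. mat2 c 1) ` S"
  then obtain c d where "x = mat2 c 1" "y = mat2 d 1" "c \<in> S" "d \<in> S" by blast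
  then show "x \<otimes>\<^bsub>G_grp\<^esub> y \<in> (\<lambda>c. mat2 c 1) ` S"
    using assms(3) by (simp add: G_grp_mult mat2_mult)
qed

lemma subgroup_unit_class_G_grp:
  assumes "g \<in> carrier G_grp" shows "subgroup (unit_class G_grp g) G_grp"
proof -
  obtain b v where g: "g = mat2 b v" "v \<in> H_set" using assms unfolding carrier_G_grp by blast
  let ?S = "{a * (v - 1) - b * (u - 1) | a u. u \<in> H_set}"
  have "0 \<in> ?S"
    using one_in_H_set by (intro CollectI exI[of _ 0] exI[of _ 1]) simp
  moreover have "- c \<in> ?S" if c: "c \<in> ?S" for c
  proof -
    obtain a u where c_eq: "c = a * (v - 1) - b * (u - 1)" and u: "u \<in> H_set"
      using c by blast
    have "- c = (- a) * (v - 1) - b * ((2 - u) - 1)"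
      by (simp add: c_eq algebra_simps)
    then show ?thesis using H_set_reflect[OF u] by blast
  qed
  moreover have "c + d \<in> ?S" if cd: "c \<in> ?S" "d \<in> ?S" for c d
  proof -
    obtain a u a' u' where c_eq: "c = a * (v - 1) - b * (u - 1)" and u: "u \<in> H_set"
      and d_eq: "d = a' * (v - 1) - b * (u' - 1)" and u': "u' \<in> H_set"
      using cd by blast
    have "c + d = (a + a') * (v - 1) - b * ((u + u' - 1) - 1)"
      by (simp add: c_eq d_eq algebra_simps)
    then show ?thesis using H_set_add_diff_one[OF u u'] by blast
  qed
  ultimately show ?thesis
    unfolding g unit_class_G_grp_mat2[OF g(2)] by (rule subgroup_translations)
qed

theorem mainTheorem16:
  shows "group (G_grp :: ('a::field poly fract ^ 2 ^ 2) monoid)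
    \<and> center (G_grp :: ('a::field poly fract ^ 2 ^ 2) monoid) = {\<one>\<^bsub>G_grp\<^esub>}
    \<and> (\<forall>g \<in> carrier (G_grp :: ('a::field poly fract ^ 2 ^ 2) monoid).
          subgroup (unit_class G_grp g) G_grp)"
  using group_G_grp center_G_grp subgroup_unit_class_G_grp by blast

end
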